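(* Let $X$ be a topological space and let $k\ge1$ be an integer. The following statements are equivalent: (1) $X$ is a uniformizable functional Alexandroff space; (1') $X$ is a uniformizable $k$-primal space; (2) $X$ is a uniformizable Alexandroff space such that $V(x)$ is finite for each $x\in X$; (3) $\{V(a):a\in X\}$ is a partition of $X$ into finite open subsets; (4) there exists a partition $\mathcal P$ of $X$ into finite subsets such that $\mathcal F_{\mathcal P}:=\{\alpha\subseteq X\times X:\bigcup\{D\times D:D\in\mathcal P\}\subseteq\alpha\}$ is a uniform structure compatible with the topology of $X$; (5) there exists a map $f:X\to X$ with $\mathrm{Per}(f)=X$ such that the topology of $X$ is the functional Alexandroff topology associated to $f$.
   Context: For a topological space $X$ and $a\in X$, $V(a):=\bigcap\{U: U\text{ open}, a\in U\}$; $X$ is Alexandroff if each $V(a)$ is open. For $f:X\to X$ and $a\in X$, $V_f(a):=\{x\in X:\exists n\ge0,\ f^n(x)=a\}$; the functional Alexandroff topology associated to $f$ is the topology with basis $\{V_f(a):a\in X\}$, and $X$ is a functional Alexandroff space if its topology is the functional Alexandroff topology of some $f:X\to X$. $X$ is $k$-primal if there are $f_1,\dots,f_k:X\to X$ such that for every $a\in X$, $V_{f_1}(a)\cap\dots\cap V_{f_k}(a)$ is open and is the smallest open neighbourhood of $a$. $\mathrm{Per}(f)=\{x\in X:\exists n\ge1,\ f^n(x)=x\}$ is the set of periodic points of $f$. A uniform structure $\mathcal F$ on $X$ (nonempty family of subsets of $X\times X$ containing $\Delta_X$ in each member, closed under supersets, finite intersections and inverses, and such that each $\alpha\in\mathcal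 F$ contains $\beta\circ\beta$ for some $\beta\in\mathcal F$) is compatible with the topology of $X$ if the topology $\{U:\forall x\in U\ \exists\alpha\in\mathcal F,\ \alpha[x]\subseteq U\}$, $\alpha[x]=\{y:(x,y)\in\alpha\}$, equals it; $X$ is uniformizable if a compatible uniform structure exists. *)

theory Defs
  imports "HOL-Analysis.Analysis" "HOL-Library.Disjoint_Sets"
begin

definition Vnbhd :: "'a topology \<Rightarrow> 'a \<Rightarrow> 'a set" where
  "Vnbhd T a = \<Inter>{U. openin T U \<and> a \<in> U}"

definition alexandroff :: "'a topology \<Rightarrow> bool" where
  "alexandroff T \<longleftrightarrow> (\<forall>a\<in>topspace T. openin T (Vnbhd T a))"

definition Vf :: "'a set \<Rightarrow> ('a \<Rightarrow> 'a) \<Rightarrow> 'a \<Rightarrow> 'a set" where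
  "Vf X f a = {x\<in>X. \<exists>n. (f ^^ n) x = a}"

definition is_functional_topology :: "'a topology \<Rightarrow> ('a \<Rightarrow> 'a) \<Rightarrow> bool" where
  "is_functional_topology T f \<longleftrightarrow>
     f ` topspace T \<subseteq> topspace T \<and>
     (\<forall>U. openin T U \<longleftrightarrow>
        (\<exists>\<B>. \<B> \<subseteq> {Vf (topspace T) f a | a. a \<in> topspace T} \<and> U = \<Union>\<B>))"

definition functional_alexandroff :: "'a topology \<Rightarrow> bool" where
  "functional_alexandroff T \<longleftrightarrow> (\<exists>f. is_functional_topology T f)"

definition k_primal :: "nat \<Rightarrow> 'a topology \<Rightarrow> bool" where
  "k_primal k T \<longleftrightarrow>
     (\<exists>fs :: nat \<Rightarrow> 'a \<Rightarrow> 'a.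
        (\<forall>i<k. fs i ` topspace T \<subseteq> topspace T) \<and>
        (\<forall>a\<in>topspace T.
           let W = (\<Inter>i<k. Vf (topspace T) (fs i) a) in
           openin T W \<and> a \<in> W \<and> (\<forall>U. openin T U \<and> a \<in> U \<longrightarrow> W \<subseteq> U)))"

definition Per :: "'a set \<Rightarrow> ('a \<Rightarrow> 'a) \<Rightarrow> 'a set" where
  "Per X f = {x\<in>X. \<exists>n\<ge>1. (f ^^ n) x = x}"

definition uniform_structure :: "'a set \<Rightarrow> ('a \<times> 'a) set set \<Rightarrow> bool" where
  "uniform_structure X F \<longleftrightarrow>
     F \<noteq> {} \<and>
     (\<forall>\<alpha>\<in>F. Id_on X \<subseteq> \<alpha> \<and> \<alpha> \<subseteq> X \<times> X) \<and>
     (\<forall>\<alpha>\<in>F. \<forall>\<beta>. \<alpha> \<subseteq> \<beta> \<and> \<beta> \<subseteq> X \<times> X \<longrightarrow> \<beta> \<in> F) \<and>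
     (\<forall>\<alpha>\<in>F. \<forall>\<beta>\<in>F. \<alpha> \<inter> \<beta> \<in> F) \<and>
     (\<forall>\<alpha>\<in>F. \<alpha>\<inverse> \<in> F) \<and>
     (\<forall>\<alpha>\<in>F. \<exists>\<beta>\<in>F. \<beta> O \<beta> \<subseteq> \<alpha>)"

definition uniform_compatible :: "'a topology \<Rightarrow> ('a \<times> 'a) set set \<Rightarrow> bool" where
  "uniform_compatible T F \<longleftrightarrow>
     (\<forall>U. openin T U \<longleftrightarrow>
        (U \<subseteq> topspace T \<and> (\<forall>x\<in>U. \<exists>\<alpha>\<in>F. \<alpha> `` {x} \<subseteq> U)))"

definition uniformizable :: "'a topology \<Rightarrow> bool" where
  "uniformizable T \<longleftrightarrow>
     (\<exists>F. uniform_structure (topspace T) F \<and> uniform_compatible T F)"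

definition partition_uniformity :: "'a set \<Rightarrow> 'a set set \<Rightarrow> ('a \<times> 'a) set set" where
  "partition_uniformity X P = {\<alpha>. \<Union>{D \<times> D | D. D \<in> P} \<subseteq> \<alpha> \<and> \<alpha> \<subseteq> X \<times> X}"

end

(*
  In a uniformizable space the specialization relation "b lies in V(a)" is symmetric: the
  uniform interior of an entourage neighbourhood of a is open, so it contains V(a). In a
  functional Alexandroff space V(a) = V_f(a) consists of the points whose f-orbit reaches a;
  symmetry then forces every point of V(a) to lie on a cycle of f through a, so V(a) is
  finite. All conditions are thereby reduced to: X is Alexandroff and the sets V(a) are
  finite and symmetric, i.e. they partition X into finite open blocks. Conversely such a
  partition P makes F_P a compatible uniformity, and a map cycling through each block is
  periodic and induces the topology; using it k times shows k-primality.
*)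
theory Submission
  imports Defs "HOL-Combinatorics.Cycles" "HOL-Combinatorics.Orbits"
begin

section \<open>Minimal open neighbourhoods\<close>

lemma Vnbhd_self: "a \<in> topspace T \<Longrightarrow> a \<in> Vnbhd T a"
  unfolding Vnbhd_def by auto

lemma Vnbhd_subset_topspace: "a \<in> topspace T \<Longrightarrow> Vnbhd T a \<subseteq> topspace T"
  unfolding Vnbhd_def by auto

lemma Vnbhd_subset_openin: "openin T U \<Longrightarrow> a \<in> U \<Longrightarrow> Vnbhd T a \<subseteq> U"
  unfolding Vnbhd_def by auto

lemma Vnbhd_eqI:
  assumes "openin T W" "a \<in> W" "\<And>U. openin T U \<Longrightarrow> a \<in> U \<Longrightarrow> W \<subseteq> U"
  shows "Vnbhd T a = W"
  using assms unfolding Vnbhd_def by blast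

lemma openin_Vnbhd: "alexandroff T \<Longrightarrow> a \<in> topspace T \<Longrightarrow> openin T (Vnbhd T a)"
  unfolding alexandroff_def by blast

lemma alexandroff_openin_iff:
  assumes "alexandroff T"
  shows "openin T U \<longleftrightarrow> U \<subseteq> topspace T \<and> (\<forall>x\<in>U. Vnbhd T x \<subseteq> U)"
proof
  assume U: "U \<subseteq> topspace T \<and> (\<forall>x\<in>U. Vnbhd T x \<subseteq> U)"
  then have "(\<Union>x\<in>U. Vnbhd T x) = U"
    using Vnbhd_self[of _ T] by blast
  moreover have "openin T (\<Union>x\<in>U. Vnbhd T x)"
    using U openin_Vnbhd[OF assms] by (intro openin_Union) auto
  ultimately show "openin T U" by simp
next
  assume "openin T U"
  then show "U \<subseteq> topspace T \<and> (\<forall>x\<in>U. Vnbhd T x \<subseteq> U)"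
    using openin_subset[of T U] Vnbhd_subset_openin[of T U] by blast
qed

definition Vnbhd_symmetric :: "'a topology \<Rightarrow> bool" where
  "Vnbhd_symmetric T \<longleftrightarrow> (\<forall>a\<in>topspace T. \<forall>b\<in>Vnbhd T a. a \<in> Vnbhd T b)"

lemma Vnbhd_symmetricD:
  "Vnbhd_symmetric T \<Longrightarrow> a \<in> topspace T \<Longrightarrow> b \<in> Vnbhd T a \<Longrightarrow> a \<in> Vnbhd T b"
  unfolding Vnbhd_symmetric_def by blast

lemma Vnbhd_eq_if_symmetric:
  assumes "alexandroff T" "Vnbhd_symmetric T" "a \<in> topspace T" "b \<in> Vnbhd T a"
  shows "Vnbhd T b = Vnbhd T a"
proof
  have b: "b \<in> topspace T"
    using assms(4) Vnbhd_subset_topspace[OF assms(3)] by blast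
  show "Vnbhd T b \<subseteq> Vnbhd T a"
    by (rule Vnbhd_subset_openin[OF openin_Vnbhd[OF assms(1,3)] assms(4)])
  show "Vnbhd T a \<subseteq> Vnbhd T b"
    by (rule Vnbhd_subset_openin[OF openin_Vnbhd[OF assms(1) b] Vnbhd_symmetricD[OF assms(2-4)]])
qed

section \<open>Uniformities\<close>

lemma uniform_structureD:
  assumes "uniform_structure X F" "\<alpha> \<in> F"
  shows "Id_on X \<subseteq> \<alpha>" "\<alpha> \<subseteq> X \<times> X" "\<alpha>\<inverse> \<in> F" "\<exists>\<beta>\<in>F. \<beta> O \<beta> \<subseteq> \<alpha>"
proof -
  note u = assms(1)[unfolded uniform_structure_def]
  show "Id_on X \<subseteq> \<alpha>" "\<alpha> \<subseteq> X \<times> X"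
    using u[THEN conjunct2, THEN conjunct1] assms(2) by simp_all
  show "\<alpha>\<inverse> \<in> F" "\<exists>\<beta>\<in>F. \<beta> O \<beta> \<subseteq> \<alpha>"
    using u[THEN conjunct2, THEN conjunct2, THEN conjunct2, THEN conjunct2] assms(2) by simp_all
qed

lemma openin_uniform_interior:
  assumes F: "uniform_structure (topspace T) F" and c: "uniform_compatible T F"
  shows "openin T {z \<in> topspace T. \<exists>\<beta>\<in>F. \<beta> `` {z} \<subseteq> A}" (is "openin T ?W")
  unfolding c[unfolded uniform_compatible_def, rule_format]
proof (intro conjI ballI)
  show "?W \<subseteq> topspace T"
    by blast
next
  fix z assume "z \<in> ?W"
  then obtain \<beta> where \<beta>: "\<beta> \<in> F" "\<beta> `` {z} \<subseteq> A" by blast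
  then obtain \<gamma> where \<gamma>: "\<gamma> \<in> F" "\<gamma> O \<gamma> \<subseteq> \<beta>"
    using uniform_structureD(4)[OF F] by blast
  have "\<gamma> `` {z} \<subseteq> ?W"
  proof
    fix w assume w: "w \<in> \<gamma> `` {z}"
    then have "\<gamma> `` {w} \<subseteq> A"
      using \<gamma>(2) \<beta>(2) by blast
    moreover have "w \<in> topspace T"
      using w uniform_structureD(2)[OF F \<gamma>(1)] by blast
    ultimately show "w \<in> ?W"
      using \<gamma>(1) by blast
  qed
  then show "\<exists>\<alpha>\<in>F. \<alpha> `` {z} \<subseteq> ?W"
    using \<gamma>(1) by (rule bexI)
qed

lemma uniformizable_Vnbhd_symmetric:
  assumes "uniformizable T"
  shows "Vnbhd_symmetric T"
  unfolding Vnbhd_symmetric_def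
proof (intro ballI)
  obtain F where F: "uniform_structure (topspace T) F" and c: "uniform_compatible T F"
    using assms unfolding uniformizable_def by blast
  fix a b assume a: "a \<in> topspace T" and b: "b \<in> Vnbhd T a"
  have in_entourage: "(a, b) \<in> \<alpha>" if \<alpha>: "\<alpha> \<in> F" for \<alpha>
  proof -
    \<comment> \<open>the uniform interior of \<open>\<alpha>[a]\<close> is an open set containing a, hence b\<close>
    let ?W = "{z \<in> topspace T. \<exists>\<beta>\<in>F. \<beta> `` {z} \<subseteq> \<alpha> `` {a}}"
    have "a \<in> ?W"
      using a \<alpha> by blast
    then have "b \<in> ?W"
      using b Vnbhd_subset_openin[OF openin_uniform_interior[OF F c]] by blast
    then obtain \<beta> where "\<beta> \<in> F" "\<beta> `` {b} \<subseteq> \<alpha> `` {a}" "b \<in> topspace T"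
      by blast
    moreover from this have "(b, b) \<in> \<beta>"
      using uniform_structureD(1)[OF F] by blast
    ultimately show ?thesis by blast
  qed
  show "a \<in> Vnbhd T b"
    unfolding Vnbhd_def
  proof (intro InterI, clarify)
    fix U assume "openin T U" "b \<in> U"
    then obtain \<alpha> where "\<alpha> \<in> F" "\<alpha> `` {b} \<subseteq> U"
      using c unfolding uniform_compatible_def by blast
    moreover have "(a, b) \<in> \<alpha>\<inverse>"
      using in_entourage uniform_structureD(3)[OF F \<open>\<alpha> \<in> F\<close>] by blast
    ultimately show "a \<in> U" by blast
  qed
qed

lemma partition_on_block_eq:
  assumes "partition_on X P" "D \<in> P" "D' \<in> P" "x \<in> D" "x \<in> D'"
  shows "D' = D"
  using assms unfolding partition_on_def disjoint_def by blast

lemma partition_uniformity_least: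
  assumes "partition_on X P"
  shows "\<Union>{D \<times> D | D. D \<in> P} \<in> partition_uniformity X P"
    and "\<And>D x. D \<in> P \<Longrightarrow> x \<in> D \<Longrightarrow> \<Union>{D \<times> D | D. D \<in> P} `` {x} = D"
    and "\<And>\<alpha> x. \<alpha> \<in> partition_uniformity X P \<Longrightarrow> \<Union>{D \<times> D | D. D \<in> P} `` {x} \<subseteq> \<alpha> `` {x}"
proof -
  show "\<Union>{D \<times> D | D. D \<in> P} \<in> partition_uniformity X P"
    using partition_onD1[OF assms] unfolding partition_uniformity_def by blast
  show "\<Union>{D \<times> D | D. D \<in> P} `` {x} = D" if "D \<in> P" "x \<in> D" for D x
    using partition_on_block_eq[OF assms _ that(1) _ that(2)] that by blast
  show "\<Union>{D \<times> D | D. D \<in> P} `` {x} \<subseteq> \<alpha> `` {x}" if "\<alpha> \<in> partition_uniformity X P" for \<alpha> x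
    using that unfolding partition_uniformity_def by blast
qed

lemma uniform_structure_partition_uniformity:
  assumes "partition_on X P"
  shows "uniform_structure X (partition_uniformity X P)"
proof -
  define E where "E = \<Union>{D \<times> D | D. D \<in> P}"
  have "E = {(x, y). \<exists>D\<in>P. x \<in> D \<and> y \<in> D}"
    unfolding E_def by blast
  then have "equiv X E"
    using equiv_partition_on[OF assms] by simp
  then have "E \<subseteq> X \<times> X" "refl_on X E" "sym E" "trans E"
    by (auto elim: equivE)
  then have E: "E \<subseteq> X \<times> X" "Id_on X \<subseteq> E" "\<And>x y. (x, y) \<in> E \<Longrightarrow> (y, x) \<in> E" "E O E \<subseteq> E"
    by (auto simp: refl_on_def intro: symD intro!: trans_O_subset)
  have F: "partition_uniformity X P = {\<alpha>. E \<subseteq> \<alpha> \<and> \<alpha> \<subseteq> X \<times> X}"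
    unfolding partition_uniformity_def E_def ..
  show ?thesis
    unfolding uniform_structure_def F
  proof (intro conjI ballI allI impI)
    show "\<exists>\<beta>\<in>{\<alpha>. E \<subseteq> \<alpha> \<and> \<alpha> \<subseteq> X \<times> X}. \<beta> O \<beta> \<subseteq> \<alpha>"
      if "\<alpha> \<in> {\<alpha>. E \<subseteq> \<alpha> \<and> \<alpha> \<subseteq> X \<times> X}" for \<alpha>
    proof
      show "E O E \<subseteq> \<alpha>"
        using E(4) that by blast
    qed (use E(1) in blast)
  qed (use E in auto)
qed

lemma uniform_compatible_partition_uniformity_iff:
  assumes P: "partition_on (topspace T) P"
  shows "uniform_compatible T (partition_uniformity (topspace T) P) \<longleftrightarrow>
         P = {Vnbhd T a | a. a \<in> topspace T} \<and> (\<forall>D\<in>P. openin T D)"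
proof -
  let ?X = "topspace T" and ?F = "partition_uniformity (topspace T) P"
  define E where "E = \<Union>{D \<times> D | D. D \<in> P}"
  note E = partition_uniformity_least[OF P, folded E_def]
  show ?thesis
  proof
    assume c: "uniform_compatible T ?F"
    have openin_block: "openin T D" if D: "D \<in> P" for D
      unfolding c[unfolded uniform_compatible_def, rule_format]
    proof (intro conjI ballI)
      show "D \<subseteq> ?X"
        using partition_onD1[OF P] D by blast
      fix x assume "x \<in> D"
      then show "\<exists>\<alpha>\<in>?F. \<alpha> `` {x} \<subseteq> D"
        using E(2)[OF D] by (intro bexI[OF _ E(1)]) simp
    qed
    have Vnbhd_block: "Vnbhd T x = D" if D: "D \<in> P" "x \<in> D" for D x
    proof (rule Vnbhd_eqI[OF openin_block[OF D(1)] D(2)])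
      fix U assume U: "openin T U" "x \<in> U"
      then have "\<forall>y\<in>U. \<exists>\<alpha>\<in>?F. \<alpha> `` {y} \<subseteq> U"
        using c unfolding uniform_compatible_def by simp
      then obtain \<alpha> where "\<alpha> \<in> ?F" "\<alpha> `` {x} \<subseteq> U"
        using U(2) by blast
      then show "D \<subseteq> U"
        using E(2)[OF D] E(3)[of \<alpha> x] by blast
    qed
    have "P = {Vnbhd T a | a. a \<in> ?X}"
    proof (intro set_eqI iffI)
      fix D assume "D \<in> P"
      moreover obtain a where "a \<in> D"
        using partition_onD3[OF P] \<open>D \<in> P\<close> by fastforce
      ultimately show "D \<in> {Vnbhd T a | a. a \<in> ?X}"
        using Vnbhd_block partition_onD1[OF P] by blast
    next
      fix D assume "D \<in> {Vnbhd T a | a. a \<in> ?X}"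
      then obtain a where "a \<in> ?X" "D = Vnbhd T a"
        by blast
      then show "D \<in> P"
        using Vnbhd_block partition_onD1[OF P] by blast
    qed
    then show "P = {Vnbhd T a | a. a \<in> ?X} \<and> (\<forall>D\<in>P. openin T D)"
      using openin_block by blast
  next
    assume R: "P = {Vnbhd T a | a. a \<in> ?X} \<and> (\<forall>D\<in>P. openin T D)"
    then have alex: "alexandroff T"
      unfolding alexandroff_def by blast
    have uniform_nbhd_iff: "(\<exists>\<alpha>\<in>?F. \<alpha> `` {x} \<subseteq> U) \<longleftrightarrow> Vnbhd T x \<subseteq> U" if x: "x \<in> ?X" for x U
    proof -
      have "E `` {x} = Vnbhd T x"
        using R E(2) Vnbhd_self[OF x] x by blast
      then show ?thesis
        using E(1) E(3)[of _ x] by blast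
    qed
    show "uniform_compatible T ?F"
      unfolding uniform_compatible_def alexandroff_openin_iff[OF alex]
      using uniform_nbhd_iff by blast
  qed
qed

lemma partition_on_Vnbhd:
  assumes "alexandroff T" "Vnbhd_symmetric T"
  shows "partition_on (topspace T) {Vnbhd T a | a. a \<in> topspace T}"
proof (rule partition_onI)
  show "\<Union>{Vnbhd T a | a. a \<in> topspace T} = topspace T"
    using Vnbhd_self[of _ T] Vnbhd_subset_topspace[of _ T] by blast
  show "{} \<notin> {Vnbhd T a | a. a \<in> topspace T}"
    using Vnbhd_self[of _ T] by blast
next
  fix p q assume "p \<in> {Vnbhd T a | a. a \<in> topspace T}" "q \<in> {Vnbhd T a | a. a \<in> topspace T}" "p \<noteq> q"
  then obtain a b where ab: "a \<in> topspace T" "b \<in> topspace T" "p = Vnbhd T a" "q = Vnbhd T b" "p \<noteq> q"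
    by blast
  show "disjnt p q"
  proof (rule ccontr)
    assume "\<not> disjnt p q"
    then obtain c where "c \<in> Vnbhd T a" "c \<in> Vnbhd T b"
      using ab unfolding disjnt_def by blast
    then have "Vnbhd T a = Vnbhd T b"
      using Vnbhd_eq_if_symmetric[OF assms ab(1)] Vnbhd_eq_if_symmetric[OF assms ab(2)] by metis
    then show False
      using ab by simp
  qed
qed

lemma Vnbhd_symmetric_if_partition_on:
  assumes "partition_on (topspace T) {Vnbhd T a | a. a \<in> topspace T}"
  shows "Vnbhd_symmetric T"
  unfolding Vnbhd_symmetric_def
proof (intro ballI)
  fix a b assume a: "a \<in> topspace T" and b: "b \<in> Vnbhd T a"
  have b_in: "b \<in> topspace T"
    using Vnbhd_subset_topspace[OF a] b by blast
  have "Vnbhd T a \<in> {Vnbhd T a | a. a \<in> topspace T}" "Vnbhd T b \<in> {Vnbhd T a | a. a \<in> topspace T}"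
    using a b_in by blast+
  then have "Vnbhd T b = Vnbhd T a"
    using partition_on_block_eq[OF assms _ _ b Vnbhd_self[OF b_in]] by blast
  then show "a \<in> Vnbhd T b"
    using Vnbhd_self[OF a] by simp
qed

definition finite_symmetric_alexandroff :: "'a topology \<Rightarrow> bool" where
  "finite_symmetric_alexandroff T \<longleftrightarrow>
     alexandroff T \<and> Vnbhd_symmetric T \<and> (\<forall>a\<in>topspace T. finite (Vnbhd T a))"

lemma finite_symmetric_alexandroff_iff_Vnbhd_partition:
  "finite_symmetric_alexandroff T \<longleftrightarrow>
     partition_on (topspace T) {Vnbhd T a | a. a \<in> topspace T} \<and>
     (\<forall>D\<in>{Vnbhd T a | a. a \<in> topspace T}. finite D \<and> openin T D)"
  unfolding finite_symmetric_alexandroff_def alexandroff_def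
  using partition_on_Vnbhd[unfolded alexandroff_def] Vnbhd_symmetric_if_partition_on by blast

lemma finite_symmetric_alexandroff_iff_partition_uniformity:
  "finite_symmetric_alexandroff T \<longleftrightarrow>
     (\<exists>P. partition_on (topspace T) P \<and> (\<forall>D\<in>P. finite D) \<and>
        uniform_structure (topspace T) (partition_uniformity (topspace T) P) \<and>
        uniform_compatible T (partition_uniformity (topspace T) P))"
  (is "_ \<longleftrightarrow> (\<exists>P. ?uniform P)")
proof
  let ?V = "{Vnbhd T a | a. a \<in> topspace T}"
  assume "finite_symmetric_alexandroff T"
  then have "partition_on (topspace T) ?V" "\<forall>D\<in>?V. finite D \<and> openin T D"
    unfolding finite_symmetric_alexandroff_iff_Vnbhd_partition by blast+
  then have "?uniform ?V"
    by (simp add: uniform_structure_partition_uniformity uniform_compatible_partition_uniformity_iff)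
  then show "\<exists>P. ?uniform P" ..
next
  assume "\<exists>P. ?uniform P"
  then obtain P where "?uniform P" ..
  then show "finite_symmetric_alexandroff T"
    unfolding finite_symmetric_alexandroff_iff_Vnbhd_partition
    using uniform_compatible_partition_uniformity_iff[of T P] by simp
qed

lemma finite_symmetric_alexandroff_iff_uniformizable:
  "finite_symmetric_alexandroff T \<longleftrightarrow>
     uniformizable T \<and> alexandroff T \<and> (\<forall>x\<in>topspace T. finite (Vnbhd T x))"
  using finite_symmetric_alexandroff_iff_partition_uniformity[of T] uniformizable_Vnbhd_symmetric[of T]
  unfolding finite_symmetric_alexandroff_def uniformizable_def by blast

section \<open>Functional Alexandroff topologies\<close>

lemma Vnbhd_eq_Vf:
  assumes f: "is_functional_topology T f" and a: "a \<in> topspace T"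
  shows "Vnbhd T a = Vf (topspace T) f a" and "openin T (Vf (topspace T) f a)"
proof -
  let ?X = "topspace T"
  have openin_iff: "openin T U \<longleftrightarrow> (\<exists>\<B>. \<B> \<subseteq> {Vf ?X f a | a. a \<in> ?X} \<and> U = \<Union>\<B>)" for U
    using f unfolding is_functional_topology_def by blast
  show openin_Vf: "openin T (Vf ?X f a)"
    unfolding openin_iff using a by (intro exI[of _ "{Vf ?X f a}"]) auto
  have a_in: "a \<in> Vf ?X f a"
    unfolding Vf_def using a by (auto intro: exI[of _ 0])
  show "Vnbhd T a = Vf ?X f a"
  proof (rule Vnbhd_eqI[OF openin_Vf a_in])
    fix U assume "openin T U" "a \<in> U"
    then obtain b where b: "a \<in> Vf ?X f b" "Vf ?X f b \<subseteq> U"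
      unfolding openin_iff by blast
    then obtain n where n: "(f ^^ n) a = b"
      unfolding Vf_def by blast
    have "Vf ?X f a \<subseteq> Vf ?X f b"
    proof
      fix x assume "x \<in> Vf ?X f a"
      then obtain m where "x \<in> ?X" "(f ^^ m) x = a"
        unfolding Vf_def by blast
      moreover from this have "(f ^^ (n + m)) x = b"
        using n by (simp add: funpow_add)
      ultimately show "x \<in> Vf ?X f b"
        unfolding Vf_def by blast
    qed
    then show "Vf ?X f a \<subseteq> U"
      using b(2) by blast
  qed
qed

lemma is_functional_topologyI:
  assumes alex: "alexandroff T" and f: "f ` topspace T \<subseteq> topspace T"
    and Vf_eq: "\<And>a. a \<in> topspace T \<Longrightarrow> Vf (topspace T) f a = Vnbhd T a"
  shows "is_functional_topology T f"
proof -
  let ?V = "{Vnbhd T a | a. a \<in> topspace T}"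
  have basis: "{Vf (topspace T) f a | a. a \<in> topspace T} = ?V"
    using Vf_eq by blast
  have "openin T U \<longleftrightarrow> (\<exists>\<B>. \<B> \<subseteq> ?V \<and> U = \<Union>\<B>)" for U
  proof
    assume "openin T U"
    then have "{Vnbhd T x | x. x \<in> U} \<subseteq> ?V" "U = \<Union>{Vnbhd T x | x. x \<in> U}"
      using alexandroff_openin_iff[OF alex, of U] Vnbhd_self[of _ T] by blast+
    then show "\<exists>\<B>. \<B> \<subseteq> ?V \<and> U = \<Union>\<B>"
      by blast
  next
    assume "\<exists>\<B>. \<B> \<subseteq> ?V \<and> U = \<Union>\<B>"
    then obtain \<B> where "\<B> \<subseteq> ?V" "U = \<Union>\<B>"
      by blast
    then show "openin T U"
      using openin_Vnbhd[OF alex] by (auto intro!: openin_Union)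
  qed
  then show ?thesis
    unfolding is_functional_topology_def basis using f by blast
qed

lemma funpow_reachable_in_orbit:
  assumes "(g ^^ n) x = y" "x \<noteq> y"
  shows "y \<in> orbit g x"
proof -
  have "0 < n"
    using assms by (cases n) auto
  then show ?thesis
    using assms(1) unfolding orbit_altdef by blast
qed

lemma finite_if_mutually_reachable:
  assumes "\<And>b. b \<in> S \<Longrightarrow> \<exists>n. (g ^^ n) a = b" and "\<And>b. b \<in> S \<Longrightarrow> \<exists>n. (g ^^ n) b = a"
  shows "finite S"
proof (cases "S \<subseteq> {a}")
  case True
  then show ?thesis
    using finite_subset by auto
next
  case False
  then obtain b where b: "b \<in> S" "b \<noteq> a"
    by blast
  obtain n m where "(g ^^ n) a = b" "(g ^^ m) b = a"
    using assms b(1) by blast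
  then have "a \<in> orbit g b" "b \<in> orbit g a"
    using b(2) by (auto intro: funpow_reachable_in_orbit)
  then have "finite (orbit g a)"
    by (rule finite_orbit[OF orbit_trans])
  moreover have "S \<subseteq> insert a (orbit g a)"
  proof
    fix c assume "c \<in> S"
    then obtain n where n: "(g ^^ n) a = c"
      using assms(1) by blast
    show "c \<in> insert a (orbit g a)"
      using funpow_reachable_in_orbit[OF n] by blast
  qed
  ultimately show ?thesis
    using finite_subset by auto
qed

lemma finite_Vnbhd_if_subset_Vf:
  assumes sym: "Vnbhd_symmetric T" and sub: "\<And>x. x \<in> topspace T \<Longrightarrow> Vnbhd T x \<subseteq> Vf (topspace T) g x"
    and a: "a \<in> topspace T"
  shows "finite (Vnbhd T a)"
proof (rule finite_if_mutually_reachable)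
  fix b assume b: "b \<in> Vnbhd T a"
  then show "\<exists>n. (g ^^ n) b = a"
    using sub[OF a] unfolding Vf_def by blast
  have "b \<in> topspace T"
    using b Vnbhd_subset_topspace[OF a] by blast
  then show "\<exists>n. (g ^^ n) a = b"
    using sub Vnbhd_symmetricD[OF sym a b] unfolding Vf_def by blast
qed

lemma Per_eq_orbit: "Per X f = {x \<in> X. x \<in> orbit f x}"
  unfolding Per_def orbit_altdef by (auto simp: Suc_le_eq) (metis)

lemma Vnbhd_symmetric_if_periodic:
  assumes f: "is_functional_topology T f" and per: "Per (topspace T) f = topspace T"
  shows "Vnbhd_symmetric T"
  unfolding Vnbhd_symmetric_def
proof (intro ballI)
  let ?X = "topspace T"
  fix a b assume a: "a \<in> ?X" and "b \<in> Vnbhd T a"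
  then obtain n where b: "b \<in> ?X" "(f ^^ n) b = a"
    unfolding Vnbhd_eq_Vf(1)[OF f a] Vf_def by blast
  have "\<exists>m. (f ^^ m) a = b"
  proof (cases "a = b")
    case False
    have "b \<in> orbit f b"
      using b(1) per unfolding Per_eq_orbit by blast
    moreover have "a \<in> orbit f b"
      using funpow_reachable_in_orbit[OF b(2)] False by blast
    ultimately have "b \<in> orbit f a"
      by (rule orbit_swap)
    then show ?thesis
      unfolding orbit_altdef by blast
  qed (auto intro: exI[of _ 0])
  then show "a \<in> Vnbhd T b"
    unfolding Vnbhd_eq_Vf(1)[OF f b(1)] Vf_def using a by blast
qed

lemma finite_symmetric_alexandroff_if_functional:
  assumes "Vnbhd_symmetric T" and f: "is_functional_topology T f"
  shows "finite_symmetric_alexandroff T"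
proof -
  have "alexandroff T"
    unfolding alexandroff_def using Vnbhd_eq_Vf[OF f] by simp
  moreover have "finite (Vnbhd T a)" if "a \<in> topspace T" for a
    using finite_Vnbhd_if_subset_Vf[OF assms(1) _ that] Vnbhd_eq_Vf(1)[OF f] by blast
  ultimately show ?thesis
    unfolding finite_symmetric_alexandroff_def using assms(1) by blast
qed

lemma finite_symmetric_alexandroff_if_k_primal:
  assumes sym: "Vnbhd_symmetric T" and "k_primal k T" and "1 \<le> k"
  shows "finite_symmetric_alexandroff T"
proof -
  let ?X = "topspace T"
  obtain fs where fs: "\<forall>a\<in>?X. openin T (\<Inter>i<k. Vf ?X (fs i) a) \<and> a \<in> (\<Inter>i<k. Vf ?X (fs i) a)
      \<and> (\<forall>U. openin T U \<and> a \<in> U \<longrightarrow> (\<Inter>i<k. Vf ?X (fs i) a) \<subseteq> U)"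
    using assms(2) unfolding k_primal_def Let_def by blast
  have V_eq: "Vnbhd T a = (\<Inter>i<k. Vf ?X (fs i) a)" if a: "a \<in> ?X" for a
    using fs a by (intro Vnbhd_eqI) blast+
  then have "Vnbhd T a \<subseteq> Vf ?X (fs 0) a" if "a \<in> ?X" for a
    using that \<open>1 \<le> k\<close> by auto
  then have "finite (Vnbhd T a)" if "a \<in> ?X" for a
    using finite_Vnbhd_if_subset_Vf[OF sym _ that] by blast
  moreover have "alexandroff T"
    unfolding alexandroff_def using fs V_eq by simp
  ultimately show ?thesis
    unfolding finite_symmetric_alexandroff_def using sym by blast
qed

section \<open>Cycling through the blocks\<close>

lemma orbit_cycle_of_list:
  assumes cs: "distinct cs" and x: "x \<in> set cs"
  shows "orbit (cycle_of_list cs) x = set cs"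
proof
  show "orbit (cycle_of_list cs) x \<subseteq> set cs"
  proof
    fix y assume "y \<in> orbit (cycle_of_list cs) x"
    then show "y \<in> set cs"
      by induction (use x in \<open>auto simp: permutes_in_image[OF cycle_permutes]\<close>)
  qed
  show "set cs \<subseteq> orbit (cycle_of_list cs) x"
  proof
    fix y assume "y \<in> set cs"
    then obtain i j where ij: "i < length cs" "j < length cs" "x = cs ! i" "y = cs ! j"
      using x by (auto simp: in_set_conv_nth)
    let ?n = "length cs - i + j"
    have "(cycle_of_list cs ^^ ?n) x = rotate ?n cs ! i"
      using cyclic_rotation[OF cs, of ?n] ij(1,3) by (metis nth_map)
    also have "\<dots> = cs ! ((?n + i) mod length cs)"
      using ij(1) by (rule nth_rotate)
    also have "(?n + i) mod length cs = j"
      using ij(1,2) by simp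
    finally show "y \<in> orbit (cycle_of_list cs) x"
      unfolding orbit_altdef using ij by (intro CollectI exI[of _ ?n]) simp
  qed
qed

text \<open>The cycle used at x depends on x only through its block V(x), so all points of a
  block follow the same cycle. Outside topspace V(x) is UNIV and the value is irrelevant.\<close>

definition block_cycle :: "'a topology \<Rightarrow> 'a \<Rightarrow> 'a" where
  "block_cycle T x = cycle_of_list (SOME cs. distinct cs \<and> set cs = Vnbhd T x) x"

lemma orbit_block_cycle:
  assumes T: "finite_symmetric_alexandroff T" and a: "a \<in> topspace T"
  shows "orbit (block_cycle T) a = Vnbhd T a"
proof -
  define cs where "cs = (SOME cs. distinct cs \<and> set cs = Vnbhd T a)"
  have "finite (Vnbhd T a)"
    using T a unfolding finite_symmetric_alexandroff_def by blast
  then have "\<exists>cs. distinct cs \<and> set cs = Vnbhd T a"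
    using finite_distinct_list by blast
  then have cs: "distinct cs" "set cs = Vnbhd T a"
    unfolding cs_def by (metis (mono_tags, lifting) someI_ex)+
  have "block_cycle T x = cycle_of_list cs x" if "x \<in> Vnbhd T a" for x
    using Vnbhd_eq_if_symmetric[of T a x] T a that
    unfolding block_cycle_def cs_def finite_symmetric_alexandroff_def by simp
  then have "orbit (block_cycle T) a = orbit (cycle_of_list cs) a"
    using Vnbhd_self[OF a]
    by (intro orbit_cong0[of _ "Vnbhd T a"]) (auto simp: permutes_in_image[OF cycle_permutes] simp flip: cs(2))
  also have "\<dots> = Vnbhd T a"
    using orbit_cycle_of_list[OF cs(1)] cs(2) Vnbhd_self[OF a] by simp
  finally show ?thesis .
qed

lemma Vf_block_cycle:
  assumes T: "finite_symmetric_alexandroff T" and a: "a \<in> topspace T"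
  shows "Vf (topspace T) (block_cycle T) a = Vnbhd T a"
proof
  have alex: "alexandroff T" and sym: "Vnbhd_symmetric T"
    using T unfolding finite_symmetric_alexandroff_def by blast+
  show "Vf (topspace T) (block_cycle T) a \<subseteq> Vnbhd T a"
  proof
    fix x assume "x \<in> Vf (topspace T) (block_cycle T) a"
    then obtain n where x: "x \<in> topspace T" and n: "(block_cycle T ^^ n) x = a"
      unfolding Vf_def by blast
    have "a \<in> Vnbhd T x"
      using funpow_reachable_in_orbit[OF n] orbit_block_cycle[OF T x] Vnbhd_self[OF x] by blast
    then show "x \<in> Vnbhd T a"
      using Vnbhd_eq_if_symmetric[OF alex sym x] Vnbhd_self[OF x] by blast
  qed
  show "Vnbhd T a \<subseteq> Vf (topspace T) (block_cycle T) a"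
  proof
    fix b assume b: "b \<in> Vnbhd T a"
    then have b_in: "b \<in> topspace T"
      using Vnbhd_subset_topspace[OF a] by blast
    then have "a \<in> orbit (block_cycle T) b"
      using orbit_block_cycle[OF T b_in] Vnbhd_symmetricD[OF sym a b] by simp
    then show "b \<in> Vf (topspace T) (block_cycle T) a"
      unfolding Vf_def orbit_altdef using b_in by blast
  qed
qed

lemma Per_block_cycle:
  assumes "finite_symmetric_alexandroff T"
  shows "Per (topspace T) (block_cycle T) = topspace T"
  unfolding Per_eq_orbit using orbit_block_cycle[OF assms] Vnbhd_self[of _ T] by blast

lemma is_functional_topology_block_cycle:
  assumes T: "finite_symmetric_alexandroff T"
  shows "is_functional_topology T (block_cycle T)"
proof (rule is_functional_topologyI[OF _ _ Vf_block_cycle[OF T]])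
  show "alexandroff T"
    using T unfolding finite_symmetric_alexandroff_def by blast
  show "block_cycle T ` topspace T \<subseteq> topspace T"
    using orbit.base[of "block_cycle T"] orbit_block_cycle[OF T] Vnbhd_subset_topspace[of _ T] by blast
qed

lemma k_primal_if_finite_symmetric_alexandroff:
  assumes T: "finite_symmetric_alexandroff T" and k: "1 \<le> k"
  shows "k_primal k T"
  unfolding k_primal_def Let_def
proof (intro exI[of _ "\<lambda>_. block_cycle T"] conjI ballI)
  fix a assume a: "a \<in> topspace T"
  have "(\<Inter>i<k. Vf (topspace T) (block_cycle T) a) = Vnbhd T a"
    using k Vf_block_cycle[OF T a] by (auto simp: lessThan_empty_iff)
  then show "openin T (\<Inter>i<k. Vf (topspace T) (block_cycle T) a)"
    and "a \<in> (\<Inter>i<k. Vf (topspace T) (block_cycle T) a)"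
    and "\<forall>U. openin T U \<and> a \<in> U \<longrightarrow> (\<Inter>i<k. Vf (topspace T) (block_cycle T) a) \<subseteq> U"
    using T a Vnbhd_self[OF a] Vnbhd_subset_openin[of T _ a]
    unfolding finite_symmetric_alexandroff_def alexandroff_def by auto
qed (use is_functional_topology_block_cycle[OF T] in \<open>auto simp: is_functional_topology_def\<close>)

lemma finite_symmetric_alexandroff_iff_functional_alexandroff:
  "finite_symmetric_alexandroff T \<longleftrightarrow> uniformizable T \<and> functional_alexandroff T"
  unfolding functional_alexandroff_def
  using finite_symmetric_alexandroff_iff_uniformizable is_functional_topology_block_cycle
    finite_symmetric_alexandroff_if_functional uniformizable_Vnbhd_symmetric by metis

lemma finite_symmetric_alexandroff_iff_k_primal:
  assumes "1 \<le> k"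
  shows "finite_symmetric_alexandroff T \<longleftrightarrow> uniformizable T \<and> k_primal k T"
  using finite_symmetric_alexandroff_iff_uniformizable k_primal_if_finite_symmetric_alexandroff[OF _ assms]
    finite_symmetric_alexandroff_if_k_primal[OF _ _ assms] uniformizable_Vnbhd_symmetric by metis

lemma finite_symmetric_alexandroff_iff_periodic_functional:
  "finite_symmetric_alexandroff T \<longleftrightarrow>
     (\<exists>f. Per (topspace T) f = topspace T \<and> is_functional_topology T f)"
  using Per_block_cycle is_functional_topology_block_cycle
    finite_symmetric_alexandroff_if_functional Vnbhd_symmetric_if_periodic by metis

theorem mainTheorem8:
  fixes T :: "'a topology" and k :: nat
  assumes "k \<ge> 1"
  shows "let X = topspace T;
             S1 = (uniformizable T \<and> functional_alexandroff T);
             S1' = (uniformizable T \<and> k_primal k T);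
             S2 = (uniformizable T \<and> alexandroff T \<and> (\<forall>x\<in>X. finite (Vnbhd T x)));
             S3 = (let P = {Vnbhd T a | a. a \<in> X} in
                     partition_on X P \<and> (\<forall>D\<in>P. finite D \<and> openin T D));
             S4 = (\<exists>P. partition_on X P \<and> (\<forall>D\<in>P. finite D) \<and>
                     uniform_structure X (partition_uniformity X P) \<and>
                     uniform_compatible T (partition_uniformity X P));
             S5 = (\<exists>f. Per X f = X \<and> is_functional_topology T f)
         in (S1 \<longleftrightarrow> S1') \<and> (S1 \<longleftrightarrow> S2) \<and> (S1 \<longleftrightarrow> S3) \<and> (S1 \<longleftrightarrow> S4) \<and> (S1 \<longleftrightarrow> S5)"
  unfolding Let_def
    finite_symmetric_alexandroff_iff_functional_alexandroff[symmetric]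
    finite_symmetric_alexandroff_iff_k_primal[OF assms, symmetric]
    finite_symmetric_alexandroff_iff_uniformizable[symmetric]
    finite_symmetric_alexandroff_iff_Vnbhd_partition[symmetric]
    finite_symmetric_alexandroff_iff_partition_uniformity[symmetric]
    finite_symmetric_alexandroff_iff_periodic_functional[symmetric]
  by simp

end
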